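(* Let $p\in(0,1)$, $d\ge2$ an integer, and fix $r_1,r_2\in\mathbb{R}$ with $r_2-r_1>0$. With $x_i=\big[-\kappa^2\frac{2}{d-1}r_it^{2/3}-\kappa s_it^{1/3}\big]$ and $n_i=\big[\frac{p(d-1)}{d(d-p)}t+\kappa^2\frac{2}{d(d-1)}r_it^{2/3}\big]$, there is a constant $C_1$ independent of $t$ such that for any $s_1,s_2\in\mathbb{R}$ the bound $$\kappa t^{1/3}\Big(\frac{d}{d-1}\Big)^{x_2+dn_2-(x_1+dn_1)}\Big(\frac{d^d}{(d-1)^{d-1}}\Big)^{n_1-n_2}\binom{x_1-x_2-1}{n_2-n_1-1}\le C_1e^{-|s_2-s_1|}$$ holds for $t$ large enough.
   Context: $\kappa=\frac{(2(1-p)p)^{1/3}(d(d-1))^{2/3}}{d-p}$; $[\cdot]$ is the integer part; $\binom{a}{b}=\frac{a!}{b!(a-b)!}$ for $0\le b\le a$ and $0$ otherwise. *)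

theory Defs
  imports Complex_Main
begin

definition kappa :: "real \<Rightarrow> real \<Rightarrow> real" where
  "kappa p d = (2 * (1 - p) * p) powr (1/3) * (d * (d - 1)) powr (2/3) / (d - p)"

definition int_binom :: "int \<Rightarrow> int \<Rightarrow> real" where
  "int_binom a b = (if 0 \<le> b \<and> b \<le> a then real (nat a choose nat b) else 0)"

definition x_pt :: "real \<Rightarrow> real \<Rightarrow> real \<Rightarrow> real \<Rightarrow> real \<Rightarrow> int" where
  "x_pt p d r s t = \<lfloor>- ((kappa p d)^2 * (2 / (d - 1)) * r * t powr (2/3)) - kappa p d * s * t powr (1/3)\<rfloor>"

definition n_pt :: "real \<Rightarrow> real \<Rightarrow> real \<Rightarrow> real \<Rightarrow> int" where
  "n_pt p d r t = \<lfloor>p * (d - 1) / (d * (d - p)) * t + (kappa p d)^2 * (2 / (d * (d - 1))) * r * t powr (2/3)\<rfloor>"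

end

theory Submission
  imports Defs
begin

(*
  Write T = t^(1/3).  The integers A = x1 - x2 - 1 and B = n2 - n1 - 1 satisfy
  A ~ d*beta*T^2 + kappa*(s2 - s1)*T and B ~ beta*T^2 with beta = 2*kappa^2*(r2 - r1)/(d*(d - 1)),
  and the two powers in the statement turn binom(A, B) into P(Bin(A, 1/d) = B)/d.
  The mean A/d lies at distance ~ (kappa/d)*(s2 - s1)*T from B, that is, a fixed multiple
  of |s2 - s1| standard deviations away.  So the claim follows from the local bound
    P(Bin(n, q) = k) <= 8/sigma * exp(1/2 - (k - n*q)^2/(4*n)),   sigma^2 = n*q*(1 - q),
  together with exp(-c*s^2) <= exp(1/(4*c)) * exp(-|s|).

  The local bound only uses the ratios of consecutive binomial probabilities.  Near the
  mean they are 1 - O(1/sigma), so about sigma/4 consecutive probabilities are all at least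
  half of the last one; since they sum to at most 1, that one is at most 8/sigma.  Below the
  mean the probabilities increase geometrically towards the mean, which gives the Gaussian
  factor.
*)

definition binomial_prob :: "real \<Rightarrow> nat \<Rightarrow> nat \<Rightarrow> real" where
  "binomial_prob q n k = real (n choose k) * q ^ k * (1 - q) ^ (n - k)"

lemma binomial_prob_nonneg: "0 \<le> q \<Longrightarrow> q \<le> 1 \<Longrightarrow> 0 \<le> binomial_prob q n k"
  by (simp add: binomial_prob_def)

lemma binomial_prob_eq_0: "n < k \<Longrightarrow> binomial_prob q n k = 0"
  by (simp add: binomial_prob_def)

lemma binomial_prob_swap: "k \<le> n \<Longrightarrow> binomial_prob q n k = binomial_prob (1 - q) n (n - k)"
  by (simp add: binomial_prob_def binomial_symmetric[of k n] mult_ac)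

lemma sum_binomial_prob_le_1:
  assumes "0 \<le> q" "q \<le> 1" "S \<subseteq> {..n}"
  shows "sum (binomial_prob q n) S \<le> 1"
proof -
  have "sum (binomial_prob q n) S \<le> (\<Sum>k\<le>n. binomial_prob q n k)"
    using assms by (intro sum_mono2) (auto intro: binomial_prob_nonneg)
  also have "\<dots> = (q + (1 - q)) ^ n"
    unfolding binomial_prob_def by (rule binomial_ring[symmetric])
  finally show ?thesis by simp
qed

lemma binomial_prob_le_1: "0 \<le> q \<Longrightarrow> q \<le> 1 \<Longrightarrow> binomial_prob q n k \<le> 1"
  using sum_binomial_prob_le_1[of q "{k}" n] binomial_prob_eq_0[of n k q]
  by (cases "k \<le> n") auto

lemma binomial_prob_Suc:
  "binomial_prob q n (Suc j) * real (Suc j) * (1 - q) = binomial_prob q n j * real (n - j) * q"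
proof (cases "j < n")
  case True
  have choose: "real (Suc j) * real (n choose Suc j) = real (n - j) * real (n choose j)"
    by (metis of_nat_mult binomial_absorption binomial_absorb_comp)
  have "n - j = Suc (n - Suc j)" using True by simp
  then have "binomial_prob q n j * real (n - j) * q
      = real (n - j) * real (n choose j) * q ^ Suc j * (1 - q) ^ Suc (n - Suc j)"
    by (simp add: binomial_prob_def mult_ac)
  also have "\<dots> = binomial_prob q n (Suc j) * real (Suc j) * (1 - q)"
    by (simp only: choose[symmetric]) (simp add: binomial_prob_def mult_ac)
  finally show ?thesis ..
qed (simp add: binomial_prob_def)

lemma binomial_prob_le_Suc:
  assumes q: "0 < q" "q < 1" and u: "0 \<le> u" "real (Suc j) \<le> real n * q - u"
  shows "binomial_prob q n j \<le> (1 - u / (real n * q)) * binomial_prob q n (Suc j)"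
proof -
  have "real (Suc j) \<le> real n" using u q mult_left_le[of q "real n"] by simp
  then have n_pos: "0 < real n" and pos: "0 < real (n - j) * q * real n" using q by simp_all
  have key: "real (Suc j) * (1 - q) * real n \<le> (real n * q - u) * real (n - j)"
  proof -
    have "real (Suc j) * ((1 - q) * real n) \<le> (real n * q - u) * ((1 - q) * real n)"
      using u q by (intro mult_right_mono) auto
    also have "\<dots> \<le> (real n * q - u) * real (n - j)"
      using u by (intro mult_left_mono) (auto simp: of_nat_diff algebra_simps)
    finally show ?thesis by (simp add: mult_ac)
  qed
  have "binomial_prob q n j * (real (n - j) * q * real n)
      = binomial_prob q n (Suc j) * (real (Suc j) * (1 - q) * real n)"
    using binomial_prob_Suc[of q n j] by (simp add: mult_ac)
  also have "\<dots> \<le> binomial_prob q n (Suc j) * ((real n * q - u) * real (n - j))"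
    using key q by (intro mult_left_mono binomial_prob_nonneg) auto
  also have "\<dots> = (1 - u / (real n * q)) * binomial_prob q n (Suc j) * (real (n - j) * q * real n)"
    using n_pos q by (simp add: field_simps)
  finally show ?thesis using pos by (rule mult_right_le_imp_le)
qed

lemma binomial_prob_le_add:
  assumes q: "0 < q" "q < 1" and u: "0 \<le> u" "real (k + m) \<le> real n * q - u"
  shows "binomial_prob q n k \<le> (1 - u / (real n * q)) ^ m * binomial_prob q n (k + m)"
  using u(2)
proof (induction m)
  case (Suc m)
  have "1 \<le> real n * q" using Suc.prems u by simp
  then have "0 < real n * q" by simp
  then have factor_nonneg: "0 \<le> 1 - u / (real n * q)" using Suc.prems by simp
  have "binomial_prob q n k \<le> (1 - u / (real n * q)) ^ m * binomial_prob q n (k + m)"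
    using Suc by simp
  also have "\<dots> \<le> (1 - u / (real n * q)) ^ m * ((1 - u / (real n * q)) * binomial_prob q n (Suc (k + m)))"
    using Suc.prems q u factor_nonneg by (intro mult_left_mono binomial_prob_le_Suc) auto
  finally show ?case by (simp add: mult_ac)
qed simp

lemma binomial_prob_Suc_le:
  assumes q: "0 < q" "q < 1" and j: "j < n" "real n * q - E \<le> real j"
  shows "(1 - E / (real n * q * (1 - q))) * binomial_prob q n (Suc j) \<le> binomial_prob q n j"
proof (cases "0 \<le> 1 - E / (real n * q * (1 - q))")
  case True
  define \<sigma>2 where "\<sigma>2 = real n * q * (1 - q)"
  define \<rho> where "\<rho> = 1 - E / \<sigma>2"
  have var_pos: "0 < \<sigma>2" unfolding \<sigma>2_def using q j by simp
  have rho: "\<rho> * \<sigma>2 = \<sigma>2 - E" unfolding \<rho>_def using var_pos by (simp add: field_simps)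
  have "\<sigma>2 * (\<rho> * (real n * (1 - q) + E) * q) = (\<sigma>2 - E) * (real n * (1 - q) + E) * q"
    by (simp add: rho[symmetric] mult_ac)
  also have "\<dots> = \<sigma>2 * ((real n * q - E) * (1 - q)) - q * E\<^sup>2"
    unfolding \<sigma>2_def by (simp add: algebra_simps power2_eq_square)
  also have "\<dots> \<le> \<sigma>2 * ((real n * q - E) * (1 - q))"
    using q by simp
  finally have "\<rho> * (real n * (1 - q) + E) * q \<le> (real n * q - E) * (1 - q)"
    using var_pos by simp
  moreover have "\<rho> * real (n - j) * q \<le> \<rho> * (real n * (1 - q) + E) * q"
    using True j q unfolding \<rho>_def \<sigma>2_def
    by (intro mult_right_mono mult_left_mono) (auto simp: of_nat_diff algebra_simps)
  moreover have "(real n * q - E) * (1 - q) \<le> real (Suc j) * (1 - q)"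
    using j q by (intro mult_right_mono) auto
  ultimately have "\<rho> * real (n - j) * q \<le> real (Suc j) * (1 - q)"
    by linarith
  then have "binomial_prob q n (Suc j) * (\<rho> * real (n - j) * q)
      \<le> binomial_prob q n (Suc j) * (real (Suc j) * (1 - q))"
    using q by (intro mult_left_mono binomial_prob_nonneg) auto
  also have "\<dots> = binomial_prob q n j * (real (n - j) * q)"
    using binomial_prob_Suc[of q n j] by (simp add: mult_ac)
  finally have "(\<rho> * binomial_prob q n (Suc j)) * (real (n - j) * q)
      \<le> binomial_prob q n j * (real (n - j) * q)"
    by (simp add: mult_ac)
  then show ?thesis unfolding \<rho>_def \<sigma>2_def using j q by simp
next
  case False
  then have "(1 - E / (real n * q * (1 - q))) * binomial_prob q n (Suc j) \<le> 0"
    using q by (intro mult_nonpos_nonneg binomial_prob_nonneg) auto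
  then show ?thesis using binomial_prob_nonneg[of q n j] q by linarith
qed

lemma binomial_prob_diff_ge:
  assumes q: "0 < q" "q < 1" and k: "k \<le> n" "i \<le> k" "real n * q - E \<le> real (k - i)"
  shows "(1 - real i * (E / (real n * q * (1 - q)))) * binomial_prob q n k \<le> binomial_prob q n (k - i)"
  using k(2,3)
proof (induction i)
  case (Suc i)
  define \<epsilon> where "\<epsilon> = E / (real n * q * (1 - q))"
  have IH: "(1 - real i * \<epsilon>) * binomial_prob q n k \<le> binomial_prob q n (k - i)"
    using Suc by (simp add: \<epsilon>_def)
  have "Suc (k - Suc i) = k - i" using Suc.prems by simp
  then have step: "(1 - \<epsilon>) * binomial_prob q n (k - i) \<le> binomial_prob q n (k - Suc i)"
    using binomial_prob_Suc_le[OF q, of "k - Suc i" n E] Suc.prems k(1) by (simp add: \<epsilon>_def)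
  have nonneg: "0 \<le> binomial_prob q n k" "0 \<le> binomial_prob q n (k - Suc i)"
    using q by (auto intro: binomial_prob_nonneg)
  show ?case
  proof (cases "1 - real (Suc i) * \<epsilon> \<le> 0")
    case True
    then have "(1 - real (Suc i) * \<epsilon>) * binomial_prob q n k \<le> 0"
      using nonneg by (intro mult_nonpos_nonneg) auto
    then show ?thesis using nonneg unfolding \<epsilon>_def by linarith
  next
    case False
    have "\<epsilon> \<le> real (Suc i) * \<epsilon>" if "0 < \<epsilon>"
      using that by (simp add: algebra_simps)
    with False have "0 \<le> 1 - \<epsilon>" by (cases "0 < \<epsilon>") linarith+
    have "0 \<le> \<epsilon> * \<epsilon> * real i" by simp
    then have "1 - real (Suc i) * \<epsilon> \<le> (1 - \<epsilon>) * (1 - real i * \<epsilon>)"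
      by (simp add: algebra_simps)
    then have "(1 - real (Suc i) * \<epsilon>) * binomial_prob q n k
        \<le> (1 - \<epsilon>) * ((1 - real i * \<epsilon>) * binomial_prob q n k)"
      using nonneg by (simp add: mult_right_mono mult.assoc[symmetric])
    also have "\<dots> \<le> (1 - \<epsilon>) * binomial_prob q n (k - i)"
      using IH \<open>0 \<le> 1 - \<epsilon>\<close> by (rule mult_left_mono)
    also have "\<dots> \<le> binomial_prob q n (k - Suc i)"
      by (rule step)
    finally show ?thesis unfolding \<epsilon>_def .
  qed
qed simp

lemma binomial_prob_le_window:
  assumes q: "0 < q" "q < 1" and k: "k \<le> n" "L \<le> k" "real n * q - D \<le> real k"
    and L: "real L * (D + real L) \<le> real n * q * (1 - q) / 2"
  shows "binomial_prob q n k \<le> 2 / (real L + 1)"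
proof -
  define \<epsilon> where "\<epsilon> = (D + real L) / (real n * q * (1 - q))"
  have L_bound: "real L * \<epsilon> \<le> 1 / 2" if "0 < \<epsilon>"
  proof -
    have "0 < real n * q * (1 - q)"
      using that q unfolding \<epsilon>_def by (cases "real n * q * (1 - q) = 0") auto
    then show ?thesis using L unfolding \<epsilon>_def by (simp add: field_simps)
  qed
  have small: "real i * \<epsilon> \<le> 1 / 2" if "i \<le> L" for i
  proof (cases "0 < \<epsilon>")
    case True
    then have "real i * \<epsilon> \<le> real L * \<epsilon>" using that by (simp add: mult_right_mono)
    with L_bound[OF True] show ?thesis by linarith
  qed (use mult_nonneg_nonpos[of "real i" \<epsilon>] in simp)
  have half: "binomial_prob q n k / 2 \<le> binomial_prob q n (k - i)" if "i \<le> L" for i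
  proof -
    have "1 / 2 \<le> 1 - real i * \<epsilon>" using small[OF that] by simp
    then have "1 / 2 * binomial_prob q n k \<le> (1 - real i * \<epsilon>) * binomial_prob q n k"
      using q by (intro mult_right_mono binomial_prob_nonneg) auto
    then have "binomial_prob q n k / 2 \<le> (1 - real i * \<epsilon>) * binomial_prob q n k"
      by simp
    also have "\<dots> \<le> binomial_prob q n (k - i)"
      unfolding \<epsilon>_def using that k by (intro binomial_prob_diff_ge q) (auto simp: of_nat_diff)
    finally show ?thesis .
  qed
  have "(real L + 1) * (binomial_prob q n k / 2) = (\<Sum>i\<le>L. binomial_prob q n k / 2)"
    by simp
  also have "\<dots> \<le> (\<Sum>i\<le>L. binomial_prob q n (k - i))"
    using half by (intro sum_mono) auto
  also have "\<dots> = sum (binomial_prob q n) ((\<lambda>i. k - i) ` {..L})"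
    using k by (subst sum.reindex) (auto simp: inj_on_def)
  also have "\<dots> \<le> 1"
    using q k by (intro sum_binomial_prob_le_1) auto
  finally show ?thesis by (simp add: field_simps)
qed

lemma binomial_prob_le_inverse_sqrt_above:
  assumes q: "0 < q" "q < 1" and n: "0 < n" and k: "k \<le> n" "real n * q - 1 \<le> real k"
  shows "binomial_prob q n k \<le> 8 / sqrt (real n * q * (1 - q))"
proof -
  define s where "s = sqrt (real n * q * (1 - q))"
  have s_pos: "0 < s" using q n by (simp add: s_def)
  have s_sq: "s\<^sup>2 = real n * q * (1 - q)" using q by (simp add: s_def)
  show ?thesis
  proof (cases "s < 2")
    case True
    then have "1 \<le> 8 / s" using s_pos by (simp add: field_simps)
    then show ?thesis using binomial_prob_le_1[of q n k] q unfolding s_def by simp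
  next
    case False
    define L where "L = nat (\<lfloor>s / 2\<rfloor> - 1)"
    have "1 \<le> \<lfloor>s / 2\<rfloor>" using False by simp
    then have L_eq: "real L + 1 = of_int \<lfloor>s / 2\<rfloor>" unfolding L_def by simp
    have L_upper: "real L + 1 \<le> s / 2" unfolding L_eq by (rule of_int_floor_le)
    have L_lower: "s / 4 \<le> real L + 1"
      using \<open>1 \<le> \<lfloor>s / 2\<rfloor>\<close> real_of_int_floor_add_one_gt[of "s / 2"] unfolding L_eq by linarith
    have L_sq: "(real L + 1)\<^sup>2 \<le> real n * q * (1 - q) / 4"
      using power_mono[OF L_upper, of 2] s_sq by (simp add: power_divide)
    have "real L + 1 \<le> (real L + 1)\<^sup>2" by (simp add: power2_eq_square)
    also have "\<dots> \<le> real n * q"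
    proof -
      have "real n * q * (1 - q) \<le> real n * q" using q by (intro mult_left_le) auto
      then show ?thesis using L_sq zero_le_power2[of "real L + 1"] by linarith
    qed
    finally have "L \<le> k" using k by simp
    moreover have "real L * (1 + real L) \<le> real n * q * (1 - q) / 2"
    proof -
      have "real L * (1 + real L) \<le> (real L + 1)\<^sup>2" by (simp add: power2_eq_square algebra_simps)
      then show ?thesis using L_sq s_sq zero_le_power2[of s] by linarith
    qed
    ultimately have "binomial_prob q n k \<le> 2 / (real L + 1)"
      using q k by (intro binomial_prob_le_window[where D = 1]) auto
    also have "\<dots> \<le> 8 / s"
      using L_lower False by (simp add: field_simps)
    finally show ?thesis unfolding s_def .
  qed
qed

lemma binomial_prob_le_inverse_sqrt:
  assumes q: "0 < q" "q < 1" and n: "0 < n"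
  shows "binomial_prob q n k \<le> 8 / sqrt (real n * q * (1 - q))"
proof (cases "k \<le> n")
  case False
  then show ?thesis using q by (simp add: binomial_prob_eq_0)
next
  case True
  show ?thesis
  proof (cases "real n * q - 1 \<le> real k")
    case True
    with \<open>k \<le> n\<close> show ?thesis by (intro binomial_prob_le_inverse_sqrt_above q n)
  next
    case False
    then have "real n * (1 - q) - 1 \<le> real (n - k)"
      using \<open>k \<le> n\<close> by (simp add: of_nat_diff algebra_simps)
    then show ?thesis
      using binomial_prob_le_inverse_sqrt_above[of "1 - q" n "n - k"] q n binomial_prob_swap[OF \<open>k \<le> n\<close>, of q]
      by (simp add: mult_ac)
  qed
qed

lemma binomial_prob_le_gaussian_below:
  assumes q: "0 < q" "q < 1" and n: "0 < n" and k: "real k \<le> real n * q"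
  shows "binomial_prob q n k
    \<le> 8 / sqrt (real n * q * (1 - q)) * exp (1 / 2 - (real n * q - real k)\<^sup>2 / (4 * real n))"
proof -
  define \<delta> where "\<delta> = real n * q - real k"
  define m where "m = nat \<lfloor>\<delta> / 2\<rfloor>"
  have mean_pos: "0 < real n * q" using n q by simp
  have \<delta>: "0 \<le> \<delta>" "\<delta> \<le> real n * q" "real n * q \<le> real n"
    using k q by (auto simp: \<delta>_def mult_left_le)
  have m: "real m \<le> \<delta> / 2" "\<delta> / 2 - 1 \<le> real m"
    using \<delta> unfolding m_def by linarith+
  have "real (k + m) \<le> real n * q - \<delta> / 2"
    using m(1) unfolding \<delta>_def by (simp add: field_simps)
  then have "binomial_prob q n k \<le> (1 - \<delta> / 2 / (real n * q)) ^ m * binomial_prob q n (k + m)"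
    using \<delta> by (intro binomial_prob_le_add q) auto
  also have "\<dots> \<le> exp (1 / 2 - \<delta>\<^sup>2 / (4 * real n)) * (8 / sqrt (real n * q * (1 - q)))"
  proof (intro mult_mono binomial_prob_le_inverse_sqrt q n)
    have "(1 - \<delta> / 2 / (real n * q)) ^ m \<le> exp (- (\<delta> / 2 / (real n * q))) ^ m"
      using \<delta> mean_pos by (intro power_mono exp_minus_ge) (auto simp: field_simps)
    also have "\<dots> = exp (- (real m * (\<delta> / 2) / (real n * q)))"
      by (simp flip: exp_of_nat_mult)
    also have "\<dots> \<le> exp (1 / 2 - \<delta>\<^sup>2 / (4 * real n))"
    proof -
      have "\<delta>\<^sup>2 / (4 * real n) \<le> \<delta>\<^sup>2 / (4 * (real n * q))"
        using \<delta> mean_pos by (intro divide_left_mono) auto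
      also have "\<dots> = (\<delta> / 2 - 1) * (\<delta> / 2) / (real n * q) + \<delta> / 2 / (real n * q)"
        using q n by (simp add: field_simps power2_eq_square)
      also have "\<dots> \<le> real m * (\<delta> / 2) / (real n * q) + 1 / 2"
        using m \<delta> mean_pos by (intro add_mono divide_right_mono mult_right_mono) (auto simp: field_simps)
      finally show ?thesis by simp
    qed
    finally show "(1 - \<delta> / 2 / (real n * q)) ^ m \<le> exp (1 / 2 - \<delta>\<^sup>2 / (4 * real n))" .
  qed (use q in \<open>auto intro: binomial_prob_nonneg\<close>)
  finally show ?thesis unfolding \<delta>_def by (simp add: mult_ac)
qed

lemma binomial_prob_le_gaussian:
  assumes q: "0 < q" "q < 1" and n: "0 < n"
  shows "binomial_prob q n k
    \<le> 8 / sqrt (real n * q * (1 - q)) * exp (1 / 2 - (real k - real n * q)\<^sup>2 / (4 * real n))"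
proof -
  consider "real k \<le> real n * q" | "n < k" | "real n * q < real k" "k \<le> n" by linarith
  then show ?thesis
  proof cases
    case 1
    then show ?thesis using binomial_prob_le_gaussian_below[OF q n] by (simp add: power2_commute)
  next
    case 2
    then show ?thesis using q by (simp add: binomial_prob_eq_0 divide_nonneg_nonneg)
  next
    case 3
    then have "real (n - k) \<le> real n * (1 - q)" by (simp add: of_nat_diff algebra_simps)
    then show ?thesis
      using binomial_prob_le_gaussian_below[of "1 - q" n "n - k"] q n 3 binomial_prob_swap[of k n q]
      by (simp add: of_nat_diff algebra_simps)
  qed
qed

lemma exp_neg_square_le:
  fixes c x :: real
  assumes "0 < c"
  shows "exp (- (c * x\<^sup>2)) \<le> exp (1 / (4 * c)) * exp (- x)"
proof -
  have "c * x\<^sup>2 - x + 1 / (4 * c) = (2 * c * x - 1)\<^sup>2 / (4 * c)"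
    using assms by (simp add: field_simps power2_eq_square)
  also have "\<dots> \<ge> 0" using assms by simp
  finally show ?thesis by (simp flip: exp_add)
qed

lemma sq_div_le_of_dist_le:
  fixes a b y z T :: real
  assumes a: "1 \<le> a" "a \<le> b * T\<^sup>2" and T: "0 < T" and y: "\<bar>y - z * T\<bar> \<le> 2"
  shows "z\<^sup>2 / (8 * b) \<le> y\<^sup>2 / (4 * a) + 1"
proof -
  define e where "e = y - z * T"
  have "e\<^sup>2 \<le> 2\<^sup>2" using y unfolding e_def by (metis abs_ge_zero power2_abs power_mono)
  then have "e\<^sup>2 \<le> 4" by simp
  moreover have "(z * T)\<^sup>2 = 2 * y\<^sup>2 + 2 * e\<^sup>2 - (y + e)\<^sup>2"
    by (simp add: e_def power2_eq_square algebra_simps)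
  ultimately have zT: "(z * T)\<^sup>2 \<le> 2 * y\<^sup>2 + 8"
    using zero_le_power2[of "y + e"] by linarith
  have "0 < b * T\<^sup>2" using a by linarith
  then have b: "0 < b" using T by (simp add: zero_less_mult_iff)
  then have "z\<^sup>2 / (8 * b) = (z * T)\<^sup>2 / (8 * (b * T\<^sup>2))"
    using T by (simp add: power_mult_distrib)
  also have "\<dots> \<le> (z * T)\<^sup>2 / (8 * a)"
    using a b T by (intro divide_left_mono mult_pos_pos) simp_all
  also have "\<dots> \<le> (2 * y\<^sup>2 + 8) / (8 * a)"
    using a zT by (intro divide_right_mono) auto
  also have "\<dots> \<le> y\<^sup>2 / (4 * a) + 1"
    using a by (simp add: field_simps)
  finally show ?thesis .
qed

lemma scaled_binomial_prob_le_gaussian: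
  fixes d A B :: nat and \<beta> z T :: real
  assumes d: "2 \<le> d" and \<beta>: "0 < \<beta>" and T: "0 < T"
    and A: "real d * \<beta> * T\<^sup>2 / 2 \<le> real A" "real A \<le> 2 * real d * \<beta> * T\<^sup>2" "1 \<le> real A"
    and B: "\<bar>real A / real d - real B - z * T\<bar> \<le> 2"
  shows "T * binomial_prob (1 / real d) A B
    \<le> 8 * exp (3 / 2) / sqrt (\<beta> * (real d - 1) / (2 * real d)) * exp (- (z\<^sup>2 / (16 * real d * \<beta>)))"
proof -
  define q where "q = 1 / real d"
  define \<gamma> where "\<gamma> = \<beta> * (real d - 1) / (2 * real d)"
  have q: "0 < q" "q < 1" using d by (auto simp: q_def)
  have \<gamma>: "0 < \<gamma>" using d \<beta> by (simp add: \<gamma>_def)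
  have "\<gamma> * T\<^sup>2 = (real d * \<beta> * T\<^sup>2 / 2) * (q * (1 - q))"
    using d by (simp add: \<gamma>_def q_def field_simps power2_eq_square)
  also have "\<dots> \<le> real A * (q * (1 - q))"
    using A q by (intro mult_right_mono) auto
  finally have "sqrt \<gamma> * T \<le> sqrt (real A * q * (1 - q))"
    using T \<gamma> by (metis mult.assoc real_sqrt_le_mono real_sqrt_mult real_sqrt_abs abs_of_pos power2_eq_square)
  then have "T * (8 / sqrt (real A * q * (1 - q))) \<le> T * (8 / (sqrt \<gamma> * T))"
    using T \<gamma> A q by (intro mult_left_mono divide_left_mono) auto
  then have scale: "T * (8 / sqrt (real A * q * (1 - q))) \<le> 8 / sqrt \<gamma>"
    using T by simp
  have "z\<^sup>2 / (8 * (2 * real d * \<beta>)) \<le> (real A * q - real B)\<^sup>2 / (4 * real A) + 1"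
    using A T B by (intro sq_div_le_of_dist_le) (auto simp: q_def mult_ac)
  then have expo: "exp (1 / 2 - (real B - real A * q)\<^sup>2 / (4 * real A))
      \<le> exp (3 / 2) * exp (- (z\<^sup>2 / (16 * real d * \<beta>)))"
    by (simp add: power2_commute flip: exp_add)
  have "binomial_prob q A B \<le> 8 / sqrt (real A * q * (1 - q)) * exp (1 / 2 - (real B - real A * q)\<^sup>2 / (4 * real A))"
    using A q by (intro binomial_prob_le_gaussian) auto
  then have "T * binomial_prob q A B
      \<le> T * (8 / sqrt (real A * q * (1 - q)) * exp (1 / 2 - (real B - real A * q)\<^sup>2 / (4 * real A)))"
    by (rule mult_left_mono) (use T in simp)
  also have "\<dots> = (T * (8 / sqrt (real A * q * (1 - q)))) * exp (1 / 2 - (real B - real A * q)\<^sup>2 / (4 * real A))"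
    by (simp only: mult.assoc)
  also have "\<dots> \<le> 8 / sqrt \<gamma> * (exp (3 / 2) * exp (- (z\<^sup>2 / (16 * real d * \<beta>))))"
    by (rule mult_mono[OF scale expo]) (use \<gamma> in auto)
  finally show ?thesis by (simp add: q_def \<gamma>_def mult_ac)
qed

lemma power_quotient_eq:
  fixes w :: real
  assumes w: "w \<noteq> 0" "w \<noteq> 1" and e: "1 \<le> e"
  shows "(w / (w - 1)) ^ (e * (B + 1)) / (w / (w - 1)) ^ (B + c + 1) / (w ^ e / (w - 1) ^ (e - 1)) ^ (B + 1)
    = (w - 1) ^ c / w ^ (B + c + 1)"
proof -
  obtain e' where e': "e = Suc e'" using e by (cases e) auto
  have w1: "w - 1 \<noteq> 0" using w by simp
  have "(w ^ e / (w - 1) ^ e) / (w ^ e / (w - 1) ^ (e - 1)) = 1 / (w - 1)"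
    using w w1 unfolding e' by (simp add: field_simps)
  moreover have "(w / (w - 1)) ^ (e * (B + 1)) / (w ^ e / (w - 1) ^ (e - 1)) ^ (B + 1)
      = ((w ^ e / (w - 1) ^ e) / (w ^ e / (w - 1) ^ (e - 1))) ^ (B + 1)"
    by (simp only: power_mult power_divide)
  ultimately have ratio: "(w / (w - 1)) ^ (e * (B + 1)) / (w ^ e / (w - 1) ^ (e - 1)) ^ (B + 1)
      = 1 / (w - 1) ^ (B + 1)"
    by (simp add: power_one_over)
  have denominator: "(w / (w - 1)) ^ (B + c + 1) = w ^ (B + c + 1) / ((w - 1) ^ c * (w - 1) ^ (B + 1))"
    by (simp add: power_divide power_add mult_ac)
  have "(w / (w - 1)) ^ (e * (B + 1)) / (w / (w - 1)) ^ (B + c + 1) / (w ^ e / (w - 1) ^ (e - 1)) ^ (B + 1)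
      = 1 / (w - 1) ^ (B + 1) / (w ^ (B + c + 1) / ((w - 1) ^ c * (w - 1) ^ (B + 1)))"
    unfolding ratio [symmetric] denominator [symmetric] by (simp only: divide_divide_eq_left mult.commute)
  also have "\<dots> = (w - 1) ^ c / w ^ (B + c + 1)"
    using w1 by simp
  finally show ?thesis .
qed

definition binomial_weight :: "nat \<Rightarrow> int \<Rightarrow> int \<Rightarrow> int \<Rightarrow> int \<Rightarrow> real" where
  "binomial_weight d x1 x2 n1 n2 =
     (real d / (real d - 1)) powi (x2 + int d * n2 - (x1 + int d * n1))
     * (real d ^ d / (real d - 1) ^ (d - 1)) powi (n1 - n2) * int_binom (x1 - x2 - 1) (n2 - n1 - 1)"

lemma binomial_weight_eq_binomial_prob:
  fixes d A B :: nat and x1 x2 n1 n2 :: int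
  assumes d: "2 \<le> d" and AB: "x1 - x2 = int A + 1" "n2 - n1 = int B + 1" "B \<le> A"
  shows "binomial_weight d x1 x2 n1 n2 = binomial_prob (1 / real d) A B / real d"
proof -
  obtain c where A: "A = B + c" using AB(3) le_Suc_ex by blast
  define w where "w = real d"
  have w: "w \<noteq> 0" "w \<noteq> 1" using d by (auto simp: w_def)
  have exponent: "x2 + int d * n2 - (x1 + int d * n1) = int (d * (B + 1)) - int (A + 1)"
    using AB by (simp add: algebra_simps)
  have "(w / (w - 1)) powi (x2 + int d * n2 - (x1 + int d * n1))
      = (w / (w - 1)) powi int (d * (B + 1)) / (w / (w - 1)) powi int (A + 1)"
    unfolding exponent by (rule power_int_diff) (use w in simp)
  then have first: "(w / (w - 1)) powi (x2 + int d * n2 - (x1 + int d * n1))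
      = (w / (w - 1)) ^ (d * (B + 1)) / (w / (w - 1)) ^ (A + 1)"
    by (simp only: power_int_of_nat)
  have "n1 - n2 = - int (B + 1)" using AB by simp
  then have second: "(w ^ d / (w - 1) ^ (d - 1)) powi (n1 - n2) = 1 / (w ^ d / (w - 1) ^ (d - 1)) ^ (B + 1)"
    by (simp only: power_int_minus power_int_of_nat inverse_eq_divide)
  have "x1 - x2 - 1 = int A" "n2 - n1 - 1 = int B" using AB by simp_all
  then have "binomial_weight d x1 x2 n1 n2
      = (w / (w - 1)) ^ (d * (B + 1)) / (w / (w - 1)) ^ (A + 1) / (w ^ d / (w - 1) ^ (d - 1)) ^ (B + 1)
        * real (A choose B)"
    using AB unfolding binomial_weight_def w_def [symmetric] first second int_binom_def by simp
  also have "\<dots> = binomial_prob (1 / w) A B / w"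
  proof -
    have "1 \<le> d" using d by simp
    show ?thesis
      using w unfolding A unfolding power_quotient_eq[OF w \<open>1 \<le> d\<close>]
      by (simp add: binomial_prob_def field_simps power_add)
  qed
  finally show ?thesis unfolding w_def .
qed

lemma binomial_weight_le_gaussian:
  fixes d :: nat and x1 x2 n1 n2 :: int and \<beta> z T :: real
  assumes d: "2 \<le> d" and \<beta>: "0 < \<beta>" and T: "1 \<le> T" "(2 * real d * \<bar>z\<bar> + 4) / (real d * \<beta>) \<le> T"
    and x: "\<bar>of_int (x1 - x2) - real d * (\<beta> * T\<^sup>2 + z * T)\<bar> < 1"
    and n: "\<bar>of_int (n2 - n1) - \<beta> * T\<^sup>2\<bar> < 1"
  shows "T * binomial_weight d x1 x2 n1 n2
    \<le> 8 * exp (3 / 2) / (real d * sqrt (\<beta> * (real d - 1) / (2 * real d))) * exp (- (z\<^sup>2 / (16 * real d * \<beta>)))"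
proof (cases "0 \<le> n2 - n1 - 1 \<and> n2 - n1 - 1 \<le> x1 - x2 - 1")
  case False
  then show ?thesis using d \<beta> by (auto simp: binomial_weight_def int_binom_def)
next
  case True
  define A B where "A = nat (x1 - x2 - 1)" and "B = nat (n2 - n1 - 1)"
  have AB: "x1 - x2 = int A + 1" "n2 - n1 = int B + 1" "B \<le> A"
    using True by (auto simp: A_def B_def)
  have "2 * real d * \<bar>z\<bar> + 4 \<le> real d * \<beta> * T"
    using T d \<beta> by (simp add: pos_divide_le_eq mult_ac)
  then have "(2 * real d * \<bar>z\<bar> + 4) * T \<le> real d * \<beta> * T * T"
    using T by (intro mult_right_mono) auto
  then have large: "2 * (real d * \<bar>z\<bar> * T) + 4 \<le> real d * \<beta> * T\<^sup>2"
    using T by (simp add: power2_eq_square algebra_simps)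
  have A_range: "real d * (\<beta> * T\<^sup>2 + z * T) - 2 < real A" "real A < real d * (\<beta> * T\<^sup>2 + z * T)"
    and B: "\<beta> * T\<^sup>2 - 2 < real B" "real B < \<beta> * T\<^sup>2"
    using x n AB by (auto simp: abs_less_iff)
  have "real d * (\<beta> * T\<^sup>2 + z * T) = real d * \<beta> * T\<^sup>2 + real d * (z * T)"
    by (simp add: algebra_simps)
  moreover have "\<bar>real d * (z * T)\<bar> = real d * \<bar>z\<bar> * T" using T by (simp add: abs_mult)
  ultimately have A: "real d * \<beta> * T\<^sup>2 / 2 \<le> real A" "real A \<le> 2 * real d * \<beta> * T\<^sup>2" "1 \<le> real A"
    using A_range large by (auto simp: abs_le_iff)
  have "0 < real d" using d by simp
  then have "\<beta> * T\<^sup>2 + z * T - 2 / real d < real A / real d" "real A / real d < \<beta> * T\<^sup>2 + z * T"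
    using A_range by (simp_all add: pos_less_divide_eq pos_divide_less_eq right_diff_distrib mult.commute)
  moreover have "2 / real d \<le> 2" using d by (simp add: divide_le_eq)
  ultimately have "\<bar>real A / real d - real B - z * T\<bar> \<le> 2"
    using B by linarith
  then have "T * binomial_prob (1 / real d) A B / real d
      \<le> 8 * exp (3 / 2) / sqrt (\<beta> * (real d - 1) / (2 * real d)) * exp (- (z\<^sup>2 / (16 * real d * \<beta>))) / real d"
    using d \<beta> T A by (intro divide_right_mono scaled_binomial_prob_le_gaussian) auto
  then show ?thesis
    using binomial_weight_eq_binomial_prob[OF d AB] by (simp add: mult_ac)
qed

lemma floor_diff_approx: "\<bar>of_int (\<lfloor>x\<rfloor> - \<lfloor>y\<rfloor>) - (x - y)\<bar> < (1 :: real)"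
  using floor_correct[of x] floor_correct[of y] by (simp add: abs_less_iff) linarith

lemma x_pt_diff_approx:
  "\<bar>of_int (x_pt p d r1 s1 t - x_pt p d r2 s2 t)
    - ((kappa p d)\<^sup>2 * (2 / (d - 1)) * (r2 - r1) * t powr (2/3) + kappa p d * (s2 - s1) * t powr (1/3))\<bar> < 1"
proof -
  define X where "X r s = - ((kappa p d)\<^sup>2 * (2 / (d - 1)) * r * t powr (2/3)) - kappa p d * s * t powr (1/3)"
    for r s
  have "x_pt p d r s t = \<lfloor>X r s\<rfloor>" for r s unfolding x_pt_def X_def ..
  moreover have "X r1 s1 - X r2 s2
      = (kappa p d)\<^sup>2 * (2 / (d - 1)) * (r2 - r1) * t powr (2/3) + kappa p d * (s2 - s1) * t powr (1/3)"
    unfolding X_def by (simp add: right_diff_distrib left_diff_distrib)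
  ultimately show ?thesis using floor_diff_approx[of "X r1 s1" "X r2 s2"] by simp
qed

lemma n_pt_diff_approx:
  "\<bar>of_int (n_pt p d r2 t - n_pt p d r1 t) - (kappa p d)\<^sup>2 * (2 / (d * (d - 1))) * (r2 - r1) * t powr (2/3)\<bar> < 1"
proof -
  define N where "N r = p * (d - 1) / (d * (d - p)) * t + (kappa p d)\<^sup>2 * (2 / (d * (d - 1))) * r * t powr (2/3)"
    for r
  have "n_pt p d r t = \<lfloor>N r\<rfloor>" for r unfolding n_pt_def N_def ..
  moreover have "N r2 - N r1 = (kappa p d)\<^sup>2 * (2 / (d * (d - 1))) * (r2 - r1) * t powr (2/3)"
    unfolding N_def by (simp add: right_diff_distrib left_diff_distrib)
  ultimately show ?thesis using floor_diff_approx[of "N r2" "N r1"] by simp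
qed

lemma eventually_ge_powr_at_top:
  fixes M a :: real
  assumes "0 < a"
  shows "\<forall>\<^sub>F t in at_top. M \<le> t powr a"
  using eventually_ge_at_top[of "\<bar>M\<bar> powr (1 / a)"]
proof eventually_elim
  case (elim t)
  have "M \<le> (\<bar>M\<bar> powr (1 / a)) powr a"
    using assms by (simp add: powr_powr)
  also have "\<dots> \<le> t powr a"
    using elim assms by (intro powr_mono2) auto
  finally show ?case .
qed

lemma kappa_pos: "0 < p \<Longrightarrow> p < 1 \<Longrightarrow> 1 < d \<Longrightarrow> 0 < kappa p d"
  unfolding kappa_def by (simp add: mult_pos_pos)

lemma binomial_weight_pt_le_gaussian:
  fixes p r1 r2 s1 s2 t :: real and d :: nat
  defines "\<beta> \<equiv> (kappa p (real d))\<^sup>2 * (2 / (real d * (real d - 1))) * (r2 - r1)"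
    and "z \<equiv> kappa p (real d) / real d * (s2 - s1)"
  assumes d: "2 \<le> d" and \<beta>: "0 < \<beta>"
    and t: "0 < t" "1 \<le> t powr (1/3)" "(2 * real d * \<bar>z\<bar> + 4) / (real d * \<beta>) \<le> t powr (1/3)"
  shows "t powr (1/3) * binomial_weight d (x_pt p d r1 s1 t) (x_pt p d r2 s2 t) (n_pt p d r1 t) (n_pt p d r2 t)
    \<le> 8 * exp (3 / 2) / (real d * sqrt (\<beta> * (real d - 1) / (2 * real d))) * exp (- (z\<^sup>2 / (16 * real d * \<beta>)))"
proof -
  define T where "T = t powr (1/3)"
  have T_sq: "t powr (2/3) = T\<^sup>2"
    using t by (simp add: T_def powr_power)
  have "(kappa p d)\<^sup>2 * (2 / (real d - 1)) * (r2 - r1) * t powr (2/3) + kappa p d * (s2 - s1) * t powr (1/3)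
      = real d * (\<beta> * T\<^sup>2 + z * T)"
    using d by (simp add: T_sq T_def [symmetric] \<beta>_def z_def field_simps)
  then have "\<bar>of_int (x_pt p d r1 s1 t - x_pt p d r2 s2 t) - real d * (\<beta> * T\<^sup>2 + z * T)\<bar> < 1"
    using x_pt_diff_approx[of p d r1 s1 t r2 s2] by simp
  moreover have "\<bar>of_int (n_pt p d r2 t - n_pt p d r1 t) - \<beta> * T\<^sup>2\<bar> < 1"
    using n_pt_diff_approx[of p d r2 t r1] by (simp add: T_sq \<beta>_def mult_ac)
  ultimately show ?thesis
    using binomial_weight_le_gaussian[OF d \<beta>, of T z] t unfolding T_def by simp
qed

theorem proposition5p5:
  fixes p :: real and d :: nat and r1 r2 :: real
  assumes "0 < p" and "p < 1" and "d \<ge> 2" and "r2 - r1 > 0"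
  shows "\<exists>C1::real. \<forall>s1 s2::real. \<forall>\<^sub>F t in at_top.
    (let x1 = x_pt p (real d) r1 s1 t; x2 = x_pt p (real d) r2 s2 t;
         n1 = n_pt p (real d) r1 t; n2 = n_pt p (real d) r2 t
     in kappa p (real d) * t powr (1/3)
        * (real d / (real d - 1)) powi (x2 + int d * n2 - (x1 + int d * n1))
        * (real d ^ d / (real d - 1) ^ (d - 1)) powi (n1 - n2)
        * int_binom (x1 - x2 - 1) (n2 - n1 - 1)
        \<le> C1 * exp (- \<bar>s2 - s1\<bar>))"
proof -
  define K where "K = kappa p (real d)"
  define \<beta> where "\<beta> = K\<^sup>2 * (2 / (real d * (real d - 1))) * (r2 - r1)"
  define M where "M = 8 * exp (3 / 2) / (real d * sqrt (\<beta> * (real d - 1) / (2 * real d)))"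
  define c where "c = (K / real d)\<^sup>2 / (16 * real d * \<beta>)"
  have K: "0 < K" using assms kappa_pos unfolding K_def by simp
  have \<beta>: "0 < \<beta>" and c: "0 < c" and M: "0 \<le> M"
    using K assms by (simp_all add: \<beta>_def c_def M_def)
  have bound: "\<forall>\<^sub>F t in at_top. K * t powr (1/3)
      * binomial_weight d (x_pt p d r1 s1 t) (x_pt p d r2 s2 t) (n_pt p d r1 t) (n_pt p d r2 t)
      \<le> K * M * exp (1 / (4 * c)) * exp (- \<bar>s2 - s1\<bar>)" for s1 s2 :: real
  proof -
    define z where "z = K / real d * (s2 - s1)"
    have "z\<^sup>2 / (16 * real d * \<beta>) = c * \<bar>s2 - s1\<bar>\<^sup>2"
      unfolding z_def c_def power_mult_distrib by simp
    then have gauss: "M * exp (- (z\<^sup>2 / (16 * real d * \<beta>))) \<le> M * (exp (1 / (4 * c)) * exp (- \<bar>s2 - s1\<bar>))"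
      using mult_left_mono[OF exp_neg_square_le[OF c, of "\<bar>s2 - s1\<bar>"] M] by simp
    have "\<forall>\<^sub>F t in at_top. 0 < t \<and> 1 \<le> t powr (1/3) \<and> (2 * real d * \<bar>z\<bar> + 4) / (real d * \<beta>) \<le> t powr (1/3)"
      by (intro eventually_conj eventually_gt_at_top eventually_ge_powr_at_top) simp_all
    then show ?thesis
    proof eventually_elim
      case (elim t)
      then have "t powr (1/3)
          * binomial_weight d (x_pt p d r1 s1 t) (x_pt p d r2 s2 t) (n_pt p d r1 t) (n_pt p d r2 t)
        \<le> M * exp (- (z\<^sup>2 / (16 * real d * \<beta>)))"
        unfolding M_def z_def \<beta>_def K_def
        by (intro binomial_weight_pt_le_gaussian assms(3) \<beta>[unfolded \<beta>_def K_def]) auto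
      from order.trans[OF this gauss] show ?case
        using mult_left_mono[of _ _ K] K by (simp add: mult.assoc)
    qed
  qed
  show ?thesis
    unfolding Let_def
    by (intro exI[of _ "K * M * exp (1 / (4 * c))"] allI)
      (use bound in \<open>simp add: binomial_weight_def K_def mult.assoc\<close>)
qed

end
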